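(* Let $P$ be a subprogram of a HeyVL program $S$ such that $\mathrm{vp}[S](Z)\preceq\mathrm{vp}[P](Z)$ for all expectations $Z$. If $X,Y$ are expectations with $X\not\preceq\mathrm{vp}[P](Y)$, then $P$ is an error-witnessing slice of $S$ with respect to $(X,Y)$.
   Context: Expectations are functions from program states to $[0,\infty]$, ordered pointwise by $\preceq$; $\mathrm{vp}[S]$ is the verification pre-expectation transformer of a HeyVL statement $S$. Write $\sigma\models\{X\}S\{Y\}$ iff $X(\sigma)\le\mathrm{vp}[S](Y)(\sigma)$, and $\models\{X\}S\{Y\}$ iff this holds for all states $\sigma$. A subprogram $P$ of $S$ (obtained by removing statements) is an error-witnessing slice w.r.t. $(X,Y)$ if (1) $\not\models\{X\}P\{Y\}$ and (2) for all states $\sigma'$, $\sigma'\not\models\{X\}P\{Y\}$ implies $\sigma'\not\models\{X\}S\{Y\}$. *)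

theory Defs
  imports "HOL-Probability.Probability_Mass_Function"
begin

type_synonym ('v,'a) state = "'v \<Rightarrow> 'a"
type_synonym ('v,'a) expect = "('v,'a) state \<Rightarrow> ennreal"

datatype ('v,'a) heyvl =
    Skip
  | Assign 'v "('v,'a) state \<Rightarrow> 'a"
  | RandAssign 'v "('v,'a) state \<Rightarrow> 'a pmf"
  | Reward "('v,'a) expect"
  | Seq "('v,'a) heyvl" "('v,'a) heyvl"
  | If "('v,'a) state \<Rightarrow> bool" "('v,'a) heyvl" "('v,'a) heyvl"
  | Demonic "('v,'a) heyvl" "('v,'a) heyvl"
  | Angelic "('v,'a) heyvl" "('v,'a) heyvl"
  | Assert "('v,'a) expect"
  | Assume "('v,'a) expect"
  | Coassert "('v,'a) expect"
  | Coassume "('v,'a) expect"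
  | Havoc 'v
  | Cohavoc 'v
  | Validate
  | Covalidate

primrec vp :: "('v,'a) heyvl \<Rightarrow> ('v,'a) expect \<Rightarrow> ('v,'a) expect" where
  "vp Skip X = X"
| "vp (Assign x e) X = (\<lambda>\<sigma>. X (\<sigma>(x := e \<sigma>)))"
| "vp (RandAssign x \<mu>) X = (\<lambda>\<sigma>. \<integral>\<^sup>+ v. X (\<sigma>(x := v)) \<partial>(measure_pmf (\<mu> \<sigma>)))"
| "vp (Reward a) X = (\<lambda>\<sigma>. X \<sigma> + a \<sigma>)"
| "vp (Seq S1 S2) X = vp S1 (vp S2 X)"
| "vp (If b S1 S2) X = (\<lambda>\<sigma>. if b \<sigma> then vp S1 X \<sigma> else vp S2 X \<sigma>)"
| "vp (Demonic S1 S2) X = (\<lambda>\<sigma>. min (vp S1 X \<sigma>) (vp S2 X \<sigma>))"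
| "vp (Angelic S1 S2) X = (\<lambda>\<sigma>. max (vp S1 X \<sigma>) (vp S2 X \<sigma>))"
| "vp (Assert A) X = (\<lambda>\<sigma>. min (A \<sigma>) (X \<sigma>))"
| "vp (Assume A) X = (\<lambda>\<sigma>. if A \<sigma> \<le> X \<sigma> then \<infinity> else X \<sigma>)"
| "vp (Coassert A) X = (\<lambda>\<sigma>. max (A \<sigma>) (X \<sigma>))"
| "vp (Coassume A) X = (\<lambda>\<sigma>. if A \<sigma> \<ge> X \<sigma> then 0 else X \<sigma>)"
| "vp (Havoc x) X = (\<lambda>\<sigma>. INF v. X (\<sigma>(x := v)))"
| "vp (Cohavoc x) X = (\<lambda>\<sigma>. SUP v. X (\<sigma>(x := v)))"
| "vp Validate X = (\<lambda>\<sigma>. if X \<sigma> = \<infinity> then \<infinity> else 0)"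
| "vp Covalidate X = (\<lambda>\<sigma>. if X \<sigma> = 0 then 0 else \<infinity>)"

text \<open>P is a subprogram of S: obtained from S by removing (replacing by Skip) statements.\<close>

inductive subprog :: "('v,'a) heyvl \<Rightarrow> ('v,'a) heyvl \<Rightarrow> bool" where
  refl: "subprog S S"
| remove: "subprog Skip S"
| seq: "subprog P1 S1 \<Longrightarrow> subprog P2 S2 \<Longrightarrow> subprog (Seq P1 P2) (Seq S1 S2)"
| cond: "subprog P1 S1 \<Longrightarrow> subprog P2 S2 \<Longrightarrow> subprog (If b P1 P2) (If b S1 S2)"
| demonic: "subprog P1 S1 \<Longrightarrow> subprog P2 S2 \<Longrightarrow> subprog (Demonic P1 P2) (Demonic S1 S2)"
| angelic: "subprog P1 S1 \<Longrightarrow> subprog P2 S2 \<Longrightarrow> subprog (Angelic P1 P2) (Angelic S1 S2)"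

definition valid_at :: "('v,'a) state \<Rightarrow> ('v,'a) expect \<Rightarrow> ('v,'a) heyvl \<Rightarrow> ('v,'a) expect \<Rightarrow> bool" where
  "valid_at \<sigma> X S Y \<longleftrightarrow> X \<sigma> \<le> vp S Y \<sigma>"

definition valid :: "('v,'a) expect \<Rightarrow> ('v,'a) heyvl \<Rightarrow> ('v,'a) expect \<Rightarrow> bool" where
  "valid X S Y \<longleftrightarrow> (\<forall>\<sigma>. valid_at \<sigma> X S Y)"

definition error_witnessing_slice ::
  "('v,'a) heyvl \<Rightarrow> ('v,'a) heyvl \<Rightarrow> ('v,'a) expect \<Rightarrow> ('v,'a) expect \<Rightarrow> bool" where
  "error_witnessing_slice P S X Y \<longleftrightarrow>
     subprog P S \<and> \<not> valid X P Y \<and>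
     (\<forall>\<sigma>'. \<not> valid_at \<sigma>' X P Y \<longrightarrow> \<not> valid_at \<sigma>' X S Y)"

end

theory Submission
  imports Defs
begin

lemma valid_iff_le_vp: "valid X S Y \<longleftrightarrow> X \<le> vp S Y"
  by (simp add: valid_def valid_at_def le_fun_def)

lemma valid_at_vp_mono:
  assumes "vp S Y \<sigma> \<le> vp P Y \<sigma>" and "valid_at \<sigma> X S Y"
  shows "valid_at \<sigma> X P Y"
  using assms unfolding valid_at_def by (rule order_trans[rotated])

theorem lemma5:
  fixes P S :: "('v,'a) heyvl" and X Y :: "('v,'a) expect"
  assumes "subprog P S"
    and "\<forall>Z. vp S Z \<le> vp P Z"
    and "\<not> X \<le> vp P Y"
  shows "error_witnessing_slice P S X Y"
proof -
  have "\<not> valid X P Y"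
    using assms(3) by (simp add: valid_iff_le_vp)
  moreover have "\<not> valid_at \<sigma> X S Y" if "\<not> valid_at \<sigma> X P Y" for \<sigma>
    using that valid_at_vp_mono[of S Y \<sigma> P X] assms(2) by (auto simp: le_fun_def)
  ultimately show ?thesis
    using assms(1) by (simp add: error_witnessing_slice_def)
qed

end
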